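(* Let $a,b,c$ be positive numbers with $a<b<c$, and suppose $Q_{a,b,c}<+\infty$. Then for every $t\in[0,b)$ and every complex vector $\mathbf z=(\mathbf z(\lambda))_{\lambda\in b\mathbb Z}$, $$\sum_{\mu\in a\mathbb Z,\ 0\le\mu\le aQ_{a,b,c}+2a+b+c}|(\mathbf M_{a,b,c}(t)\mathbf z)(\mu)|\ \ge\ \frac{b}{2c}|\mathbf z(0)|.$$
   Context: For $a,b,c>0$ and $t\in\mathbb R$, $\mathbf M_{a,b,c}(t)=(\chi_{[0,c)}(t-\mu+\lambda))_{\mu\in a\mathbb Z,\lambda\in b\mathbb Z}$ is the infinite matrix with rows indexed by $a\mathbb Z$ and columns by $b\mathbb Z$, acting by $(\mathbf M_{a,b,c}(t)\mathbf x)(\mu)=\sum_{\lambda\in b\mathbb Z}\chi_{[0,c)}(t-\mu+\lambda)\mathbf x(\lambda)$ (each such sum is finite). $\mathcal B_b$ is the set of vectors $(\mathbf x(\lambda))_{\lambda\in b\mathbb Z}$ with entries in $\{0,1\}$. For $t\in\mathbb R$ and $\mathbf x\in\mathcal B_b$, let $K(t,\mathbf x)=\{\mu\in a\mathbb Z:(\mathbf M_{a,b,c}(t)\mathbf x)(\mu)=2\}$, let $Q_{a,b,c}(t,\mathbf x)=0$ if $K(t,\mathbf x)=\emptyset$ and otherwise $Q_{a,b,c}(t,\mathbf x)=\sup\{n\in\mathbb N:[\mu,\mu+na)\cap a\mathbb Z\subset K(t,\mathbf x)\text{ for some }\mu\in a\mathbb Z\}$, and $Q_{a,b,c}=\sup_{t\in\mathbb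 R}\sup_{\mathbf x\in\mathcal B_b}Q_{a,b,c}(t,\mathbf x)$. *)

theory Defs
  imports "HOL-Analysis.Analysis" "HOL-Library.Extended_Nat"
begin

text \<open>Vectors indexed by a\<int> (resp. b\<int>) are represented as functions on int:
  index m stands for \<mu> = a*m, index k stands for \<lambda> = b*k.\<close>

definition Mapply :: "real \<Rightarrow> real \<Rightarrow> real \<Rightarrow> real \<Rightarrow> (int \<Rightarrow> 'v::comm_monoid_add) \<Rightarrow> int \<Rightarrow> 'v" where
  "Mapply a b c t x m =
     (\<Sum>k\<in>{k::int. 0 \<le> t - a * of_int m + b * of_int k \<and> t - a * of_int m + b * of_int k < c}. x k)"

definition Bvec :: "(int \<Rightarrow> nat) set" where
  "Bvec = {x. \<forall>k. x k \<in> {0, 1}}"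

definition Kset :: "real \<Rightarrow> real \<Rightarrow> real \<Rightarrow> real \<Rightarrow> (int \<Rightarrow> nat) \<Rightarrow> int set" where
  "Kset a b c t x = {m. Mapply a b c t x m = 2}"

definition Qtx :: "real \<Rightarrow> real \<Rightarrow> real \<Rightarrow> real \<Rightarrow> (int \<Rightarrow> nat) \<Rightarrow> enat" where
  "Qtx a b c t x =
     (if Kset a b c t x = {} then 0
      else Sup {enat n | n. \<exists>m::int. \<forall>j::nat. j < n \<longrightarrow> m + int j \<in> Kset a b c t x})"

definition Qabc :: "real \<Rightarrow> real \<Rightarrow> real \<Rightarrow> enat" where
  "Qabc a b c = (SUP t\<in>(UNIV::real set). SUP x\<in>Bvec. Qtx a b c t x)"

end

theory Submission
  imports Defs
begin

text \<open>Row \<open>k\<close> of \<open>M(t)\<close> sums over a window of column indices whose two ends move right by 0 or 1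
  from one row to the next (because \<open>a < b\<close>), and which is never empty (because \<open>b < c\<close>).
  Follow the entries of the first window along tracks: whenever the whole window shifts, the entry
  leaving on the left hands its label to the entry entering on the right, so each label occupies at
  most one entry per window. The potential of row \<open>k\<close> measures the part of the window that is not
  a multiple of \<open>z 0\<close> carried along the track of 0; it starts at 0 and grows by at most the sum of
  the moduli of two consecutive rows of \<open>M(t) z\<close>. If the track of 0 met another surviving track in
  row \<open>K = Q\<close>, the indicator of the two tracks would be a 0-1 vector with \<open>K + 1\<close> consecutive rows
  equal to 2. Hence in row \<open>Q\<close> the entry \<open>z 0\<close> is controlled by the potential and the row itself,
  so \<open>|z 0|\<close> is at most twice the sum of the moduli of rows \<open>0, \<dots>, Q\<close>; the wider range of rows
  and the factor \<open>b/c\<close> in the statement are slack.\<close>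

lemma ceiling_add_less_one:
  fixes x d :: real
  assumes "0 \<le> d" "d < 1"
  shows "\<lceil>x + d\<rceil> = \<lceil>x\<rceil> \<or> \<lceil>x + d\<rceil> = \<lceil>x\<rceil> + 1"
proof -
  have "\<lceil>x\<rceil> \<le> \<lceil>x + d\<rceil>" using assms by (intro ceiling_mono) simp
  moreover have "x + d \<le> of_int (\<lceil>x\<rceil> + 1)" using assms le_of_int_ceiling[of x] by simp linarith
  then have "\<lceil>x + d\<rceil> \<le> \<lceil>x\<rceil> + 1" by (simp only: ceiling_le_iff)
  ultimately show ?thesis by linarith
qed

lemma Mapply_eq_window_sum:
  assumes "0 < b"
  shows "Mapply a b c t x m =
    (\<Sum>v\<in>{\<lceil>(a * of_int m - t) / b\<rceil>..<\<lceil>(a * of_int m - t + c) / b\<rceil>}. x v)"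
proof -
  have "{k. 0 \<le> t - a * of_int m + b * of_int k \<and> t - a * of_int m + b * of_int k < c}
        = {\<lceil>(a * of_int m - t) / b\<rceil>..<\<lceil>(a * of_int m - t + c) / b\<rceil>}"
    using assms by (auto simp: ceiling_le_iff less_ceiling_iff pos_divide_le_eq
        pos_less_divide_eq mult.commute)
  then show ?thesis unfolding Mapply_def by simp
qed

lemma Qabc_ge_run:
  assumes "x \<in> Bvec" and "\<And>j. j < n \<Longrightarrow> Mapply a b c t x (m + int j) = 2" and "0 < n"
  shows "enat n \<le> Qabc a b c"
proof -
  have run: "\<forall>j. j < n \<longrightarrow> m + int j \<in> Kset a b c t x"
    using assms(2) by (simp add: Kset_def)
  then have "Kset a b c t x \<noteq> {}" using assms(3) by blast
  moreover have "enat n \<le> Sup {enat n |n. \<exists>m. \<forall>j. j < n \<longrightarrow> m + int j \<in> Kset a b c t x}"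
    using run by (intro Sup_upper) blast
  ultimately have "enat n \<le> Qtx a b c t x" by (simp add: Qtx_def)
  also have "Qtx a b c t x \<le> Qabc a b c"
    unfolding Qabc_def by (rule SUP_upper2[of t], simp, rule SUP_upper[OF assms(1)])
  finally show ?thesis .
qed

lemma sum_atMost_le_sum_multiples:
  fixes f :: "int \<Rightarrow> real" and a X :: real
  assumes "0 < a" and "a * real K \<le> X" and "\<And>m. 0 \<le> f m"
  shows "(\<Sum>k\<le>K. f (int k)) \<le> (\<Sum>m\<in>{m. 0 \<le> a * of_int m \<and> a * of_int m \<le> X}. f m)"
proof -
  let ?I = "{m. 0 \<le> a * of_int m \<and> a * of_int m \<le> X}"
  have "?I \<subseteq> {0..\<lceil>X / a\<rceil>}"
  proof
    fix m assume "m \<in> ?I"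
    then have "0 \<le> m" "of_int m \<le> X / a"
      using assms(1) by (auto simp: zero_le_mult_iff pos_le_divide_eq mult.commute)
    then show "m \<in> {0..\<lceil>X / a\<rceil>}" by (simp add: le_ceiling_iff)
  qed
  then have "finite ?I" by (rule finite_subset) simp
  moreover have "int ` {..K} \<subseteq> ?I"
    using assms(1,2) by (auto intro: order_trans[of _ "a * real K"])
  ultimately have "(\<Sum>m\<in>int ` {..K}. f m) \<le> (\<Sum>m\<in>?I. f m)"
    using assms(3) by (intro sum_mono2)
  then show ?thesis by (simp add: sum.reindex)
qed

lemma sum_consecutive_pairs_le:
  fixes f :: "nat \<Rightarrow> real"
  assumes "\<And>j. 0 \<le> f j"
  shows "(\<Sum>j<K. f j + f (Suc j)) + f K \<le> 2 * (\<Sum>k\<le>K. f k)"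
  by (induction K) (auto simp: assms)

locale sliding_window =
  fixes L R :: "nat \<Rightarrow> int"
  assumes L_Suc: "L (Suc k) = L k \<or> L (Suc k) = L k + 1"
    and R_Suc: "R (Suc k) = R k \<or> R (Suc k) = R k + 1"
    and L_less_R: "L k < R k"
begin

abbreviation window :: "nat \<Rightarrow> int set" where
  "window k \<equiv> {L k..<R k}"

lemma R_mono: "k \<le> k' \<Longrightarrow> R k \<le> R k'"
proof (induction k' rule: dec_induct)
  case (step n)
  then show ?case using R_Suc[of n] by linarith
qed simp

primrec track :: "nat \<Rightarrow> int \<Rightarrow> int option" where
  "track 0 = (\<lambda>v. if v \<in> window 0 then Some v else None)"
| "track (Suc k) = (if L (Suc k) = L k + 1 \<and> R (Suc k) = R k + 1
                     then (track k)(R k := track k (L k)) else track k)"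

definition tracks :: "nat \<Rightarrow> int set" where
  "tracks k = {q. \<exists>v\<in>window k. track k v = Some q}"

definition track_count :: "nat \<Rightarrow> int \<Rightarrow> nat" where
  "track_count k q = card {v\<in>window k. track k v = Some q}"

lemma track_beyond_window: "R k \<le> v \<Longrightarrow> track k v = None"
proof (induction k arbitrary: v)
  case (Suc k)
  then show ?case using R_Suc[of k] by auto
qed simp

lemma track_stable:
  assumes "v < R k" and "k \<le> k'"
  shows "track k' v = track k v"
  using assms(2)
proof (induction k' rule: dec_induct)
  case (step n)
  have "R k \<le> R n" using step.hyps(1) by (rule R_mono)
  then show ?case using step.IH assms(1) by auto
qed simp

lemma track_count_Suc_le: "track_count (Suc k) q \<le> track_count k q"
proof -
  let ?S' = "{v\<in>window (Suc k). track (Suc k) v = Some q}"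
  let ?S = "{v\<in>window k. track k v = Some q}"
  define f where "f v = (if v = R k then L k else v)" for v
  have none: "track k (R k) = None" by (rule track_beyond_window) simp
  then have entering: "v \<in> ?S' \<Longrightarrow> v = R k \<Longrightarrow>
      L (Suc k) = L k + 1 \<and> R (Suc k) = R k + 1 \<and> track k (L k) = Some q" for v
    by (auto split: if_splits)
  have "f ` ?S' \<subseteq> ?S"
  proof
    fix w assume "w \<in> f ` ?S'"
    then obtain v where v: "v \<in> ?S'" and w: "w = f v" by auto
    show "w \<in> ?S"
    proof (cases "v = R k")
      case True
      then show ?thesis using entering[OF v] w L_less_R[of k] by (simp add: f_def)
    next
      case False
      then have "v < R k" "L k \<le> v" using v R_Suc[of k] L_Suc[of k] by auto
      then show ?thesis using v w False by (auto simp: f_def split: if_splits)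
    qed
  qed
  moreover have "inj_on f ?S'"
  proof (rule inj_onI)
    fix v w assume v: "v \<in> ?S'" and w: "w \<in> ?S'" and "f v = f w"
    then show "v = w"
      using entering[OF v] entering[OF w] L_less_R[of k]
      by (cases "v = R k"; cases "w = R k") (auto simp: f_def)
  qed
  ultimately have "card ?S' \<le> card ?S"
    by (intro card_inj_on_le) (auto simp del: atLeastLessThan_iff)
  then show ?thesis unfolding track_count_def .
qed

lemma track_count_antimono: "k \<le> k' \<Longrightarrow> track_count k' q \<le> track_count k q"
proof (induction k' rule: dec_induct)
  case (step n)
  then show ?case using track_count_Suc_le[of n q] by linarith
qed simp

lemma track_count_eq_one:
  assumes "q \<in> tracks K" and "k \<le> K"
  shows "track_count k q = 1"
proof -
  have "{v\<in>window 0. track 0 v = Some q} \<subseteq> {q}" by auto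
  then have "track_count 0 q \<le> 1" unfolding track_count_def
    using card_mono[of "{q}"] by fastforce
  moreover have "track_count K q \<ge> 1"
    using assms(1) by (auto simp: tracks_def track_count_def card_gt_0_iff Suc_le_eq
        simp del: atLeastLessThan_iff)
  ultimately show ?thesis
    using track_count_antimono[OF assms(2), of q] track_count_antimono[of 0 k q] by linarith
qed

lemma window_card_two_tracks:
  assumes "p \<in> tracks K" "q \<in> tracks K" "p \<noteq> q" "k \<le> K"
  shows "card {v\<in>window k. track K v \<in> {Some p, Some q}} = 2"
proof -
  have "{v\<in>window k. track K v \<in> {Some p, Some q}}
      = {v\<in>window k. track k v = Some p} \<union> {v\<in>window k. track k v = Some q}"
    using track_stable[of _ k K] assms(4) by auto
  also have "card \<dots> = track_count k p + track_count k q"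
    unfolding track_count_def using assms(3)
    by (subst card_Un_disjoint) (auto simp del: atLeastLessThan_iff)
  finally show ?thesis using track_count_eq_one assms by simp
qed

abbreviation window_sum :: "(int \<Rightarrow> 'a::comm_monoid_add) \<Rightarrow> nat \<Rightarrow> 'a" where
  "window_sum z k \<equiv> \<Sum>v\<in>window k. z v"

definition residual :: "(int \<Rightarrow> 'a::real_normed_vector) \<Rightarrow> int \<Rightarrow> nat \<Rightarrow> int \<Rightarrow> real" where
  "residual z p k v = (case track k v of
      None \<Rightarrow> norm (z v)
    | Some q \<Rightarrow> if q = p then norm (z v - z p) else 0)"

definition potential :: "(int \<Rightarrow> 'a::real_normed_vector) \<Rightarrow> int \<Rightarrow> nat \<Rightarrow> real" where
  "potential z p k = (\<Sum>v\<in>window k. residual z p k v) + (if p \<in> tracks k then 0 else norm (z p))"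

lemma residual_nonneg: "0 \<le> residual z p k v"
  by (auto simp: residual_def split: option.splits)

lemma potential_0:
  assumes "p \<in> window 0"
  shows "potential z p 0 = 0"
proof -
  have "p \<in> tracks 0" using assms by (auto simp: tracks_def)
  moreover have "residual z p 0 v = 0" if "v \<in> window 0" for v
    using that by (simp add: residual_def)
  ultimately show ?thesis by (simp add: potential_def)
qed

lemma window_insert_left: "window k = insert (L k) {L k + 1..<R k}"
  using L_less_R[of k] by auto

lemma window_insert_right: "{l..<R k + 1} = insert (R k) {l..<R k}" if "l \<le> R k"
  using that by auto

lemma potential_Suc_grow:
  assumes "L (Suc k) = L k" and "R (Suc k) = R k + 1"
  shows "potential z p (Suc k) \<le> potential z p k + norm (window_sum z k) + norm (window_sum z (Suc k))"
proof -
  have none: "track k (R k) = None" by (rule track_beyond_window) simp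
  have track: "track (Suc k) = track k" using assms(1) by simp
  have window: "window (Suc k) = insert (R k) (window k)"
    using assms L_less_R[of k] by (simp add: window_insert_right)
  have "tracks (Suc k) = tracks k"
    using none by (auto simp: tracks_def track window simp del: track.simps)
  moreover have "(\<Sum>v\<in>window (Suc k). residual z p (Suc k) v)
      = norm (z (R k)) + (\<Sum>v\<in>window k. residual z p k v)"
    using none by (simp add: window residual_def track del: track.simps)
  moreover have "z (R k) = window_sum z (Suc k) - window_sum z k" by (simp add: window)
  then have "norm (z (R k)) \<le> norm (window_sum z (Suc k)) + norm (window_sum z k)"
    by (simp only: norm_triangle_ineq4)
  ultimately show ?thesis by (simp add: potential_def)
qed

lemma potential_Suc_shrink:
  assumes "L (Suc k) = L k + 1" and "R (Suc k) = R k"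
  shows "potential z p (Suc k) \<le> potential z p k + norm (window_sum z k) + norm (window_sum z (Suc k))"
proof -
  have track: "track (Suc k) = track k" using assms(2) by simp
  have window: "window (Suc k) = {L k + 1..<R k}" using assms by simp
  have sum: "(\<Sum>v\<in>window k. residual z p k v)
      = residual z p k (L k) + (\<Sum>v\<in>window (Suc k). residual z p (Suc k) v)"
    unfolding residual_def track by (subst window_insert_left) (simp add: window)
  have "z (L k) = window_sum z k - window_sum z (Suc k)"
    by (subst window_insert_left) (simp add: window)
  then have left: "norm (z (L k)) \<le> norm (window_sum z k) + norm (window_sum z (Suc k))"
    by (simp only: norm_triangle_ineq4)
  have "(if p \<in> tracks (Suc k) then 0 else norm (z p))
      \<le> residual z p k (L k) + (if p \<in> tracks k then 0 else norm (z p))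
        + norm (window_sum z k) + norm (window_sum z (Suc k))"
  proof (cases "p \<in> tracks (Suc k)")
    case True
    then have "p \<in> tracks k"
      by (auto simp: tracks_def track window window_insert_left[of k] simp del: track.simps)
    then show ?thesis using True residual_nonneg[of z p k "L k"] by simp
  next
    case False
    show ?thesis
    proof (cases "p \<in> tracks k")
      case True
      with False have "track k (L k) = Some p"
        by (auto simp: tracks_def track window window_insert_left[of k] simp del: track.simps)
      then have "residual z p k (L k) = norm (z (L k) - z p)" by (simp add: residual_def)
      moreover have "norm (z p) \<le> norm (z (L k) - z p) + norm (z (L k))"
        using norm_triangle_ineq4[of "z (L k)" "z (L k) - z p"] by (simp add: add.commute)
      ultimately show ?thesis using False True left by simp
    qed (use False residual_nonneg[of z p k "L k"] in simp)
  qed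
  then show ?thesis unfolding potential_def sum by linarith
qed

lemma potential_Suc_shift:
  assumes "L (Suc k) = L k + 1" and "R (Suc k) = R k + 1"
  shows "potential z p (Suc k) \<le> potential z p k + norm (window_sum z k) + norm (window_sum z (Suc k))"
proof -
  let ?inner = "{L k + 1..<R k}"
  have track: "track (Suc k) = (track k)(R k := track k (L k))" using assms by simp
  have window: "window (Suc k) = insert (R k) ?inner"
    using assms L_less_R[of k] by (simp add: window_insert_right)
  have sum_k: "(\<Sum>v\<in>window k. residual z p k v) = residual z p k (L k) + (\<Sum>v\<in>?inner. residual z p k v)"
    by (subst window_insert_left) simp
  have sum_Suc: "(\<Sum>v\<in>window (Suc k). residual z p (Suc k) v)
      = residual z p (Suc k) (R k) + (\<Sum>v\<in>?inner. residual z p k v)"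
    by (simp add: window residual_def track del: track.simps)
  have "z (L k) - z (R k) = window_sum z k - window_sum z (Suc k)"
    by (subst window_insert_left) (simp add: window)
  then have moved: "norm (z (L k) - z (R k)) \<le> norm (window_sum z k) + norm (window_sum z (Suc k))"
    by (simp only: norm_triangle_ineq4)
  have "residual z p (Suc k) (R k) \<le> residual z p k (L k) + norm (z (L k) - z (R k))"
  proof (cases "track k (L k)")
    case None
    then show ?thesis using norm_triangle_ineq4[of "z (L k)" "z (L k) - z (R k)"]
      by (simp add: residual_def track del: track.simps)
  next
    case (Some q)
    then show ?thesis using norm_triangle_ineq[of "z (L k) - z p" "z (R k) - z (L k)"]
      by (auto simp: residual_def track norm_minus_commute simp del: track.simps)
  qed
  moreover have "tracks (Suc k) = tracks k"
    by (auto simp: tracks_def window track window_insert_left[of k] simp del: track.simps)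
  ultimately show ?thesis using moved unfolding potential_def sum_k sum_Suc by simp
qed

lemma potential_Suc_le:
  "potential z p (Suc k) \<le> potential z p k + norm (window_sum z k) + norm (window_sum z (Suc k))"
  using L_Suc[of k] R_Suc[of k] potential_Suc_grow potential_Suc_shrink potential_Suc_shift
proof -
  consider "L (Suc k) = L k" "R (Suc k) = R k" | "L (Suc k) = L k" "R (Suc k) = R k + 1"
    | "L (Suc k) = L k + 1" "R (Suc k) = R k" | "L (Suc k) = L k + 1" "R (Suc k) = R k + 1"
    using L_Suc[of k] R_Suc[of k] by blast
  then show ?thesis
  proof cases
    case 1
    then have "track (Suc k) = track k" by simp
    with 1 have "potential z p (Suc k) = potential z p k"
      by (simp add: potential_def tracks_def residual_def del: track.simps)
    then show ?thesis by simp
  next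
    case 2
    then show ?thesis by (rule potential_Suc_grow)
  next
    case 3
    then show ?thesis by (rule potential_Suc_shrink)
  next
    case 4
    then show ?thesis by (rule potential_Suc_shift)
  qed
qed


lemma potential_le:
  fixes z :: "int \<Rightarrow> 'a::real_normed_vector"
  assumes "p \<in> window 0"
  shows "potential z p k \<le> (\<Sum>j<k. norm (window_sum z j) + norm (window_sum z (Suc j)))"
proof (induction k)
  case 0
  then show ?case using potential_0[OF assms, of z] by simp
next
  case (Suc k)
  then show ?case using potential_Suc_le[of z p k] by simp
qed

lemma norm_le_potential:
  fixes z :: "int \<Rightarrow> 'a::real_normed_vector"
  assumes "p \<in> tracks K \<Longrightarrow> tracks K \<subseteq> {p}"
  shows "norm (z p) \<le> norm (window_sum z K) + potential z p K"
proof (cases "p \<in> tracks K")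
  case False
  have "0 \<le> (\<Sum>v\<in>window K. residual z p K v)" by (intro sum_nonneg residual_nonneg)
  then show ?thesis using False by (simp add: potential_def)
next
  case True
  let ?P = "{v\<in>window K. track K v = Some p}"
  define h where "h v = (if track K v = Some p then z v - z p else z v)" for v
  have only_p: "track K v = None \<or> track K v = Some p" if "v \<in> window K" for v
    using assms[OF True] that unfolding tracks_def by (cases "track K v") blast+
  have "card ?P \<ge> 1"
    using True by (auto simp: tracks_def card_gt_0_iff Suc_le_eq simp del: atLeastLessThan_iff)
  then have "norm (z p) \<le> real (card ?P) * norm (z p)" by (simp add: mult_le_cancel_right1)
  also have "real (card ?P) * norm (z p) = norm (window_sum z K - (\<Sum>v\<in>window K. h v))"
  proof -
    have "window_sum z K = (\<Sum>v\<in>window K. h v + (if track K v = Some p then z p else 0))"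
      by (intro sum.cong) (auto simp: h_def)
    also have "\<dots> = (\<Sum>v\<in>window K. h v) + real (card ?P) *\<^sub>R z p"
      by (simp add: sum.distrib sum.inter_filter[symmetric] sum_constant_scaleR)
    finally show ?thesis by simp
  qed
  also have "\<dots> \<le> norm (window_sum z K) + norm (\<Sum>v\<in>window K. h v)"
    by (rule norm_triangle_ineq4)
  also have "norm (\<Sum>v\<in>window K. h v) \<le> (\<Sum>v\<in>window K. norm (h v))"
    by (rule norm_sum)
  also have "(\<Sum>v\<in>window K. norm (h v)) = (\<Sum>v\<in>window K. residual z p K v)"
    using only_p by (intro sum.cong) (fastforce simp: h_def residual_def)+
  finally show ?thesis using True by (simp add: potential_def)
qed

lemma norm_le_window_sums:
  fixes z :: "int \<Rightarrow> 'a::real_normed_vector"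
  assumes "p \<in> window 0" and "p \<in> tracks K \<Longrightarrow> tracks K \<subseteq> {p}"
  shows "norm (z p) \<le> 2 * (\<Sum>k\<le>K. norm (window_sum z k))"
  using norm_le_potential[OF assms(2), of z] potential_le[OF assms(1), of z K]
    sum_consecutive_pairs_le[of "\<lambda>k. norm (window_sum z k)" K]
  by simp

end

lemma sliding_window_ceiling:
  fixes a b c t :: real
  assumes "0 \<le> a" and "a < b" and "b \<le> c"
  shows "sliding_window (\<lambda>k. \<lceil>(a * real k - t) / b\<rceil>) (\<lambda>k. \<lceil>(a * real k - t + c) / b\<rceil>)"
proof
  fix k
  have b: "0 < b" using assms by linarith
  have step: "0 \<le> a / b" "a / b < 1" using assms b by auto
  have "(a * real (Suc k) - t) / b = (a * real k - t) / b + a / b"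
    using b by (simp add: field_simps)
  then show "\<lceil>(a * real (Suc k) - t) / b\<rceil> = \<lceil>(a * real k - t) / b\<rceil> \<or>
      \<lceil>(a * real (Suc k) - t) / b\<rceil> = \<lceil>(a * real k - t) / b\<rceil> + 1"
    using ceiling_add_less_one[OF step] by presburger
  have "(a * real (Suc k) - t + c) / b = (a * real k - t + c) / b + a / b"
    using b by (simp add: field_simps)
  then show "\<lceil>(a * real (Suc k) - t + c) / b\<rceil> = \<lceil>(a * real k - t + c) / b\<rceil> \<or>
      \<lceil>(a * real (Suc k) - t + c) / b\<rceil> = \<lceil>(a * real k - t + c) / b\<rceil> + 1"
    using ceiling_add_less_one[OF step] by presburger
  have "(a * real k - t) / b + 1 \<le> (a * real k - t + c) / b"
    using b assms(3) by (simp add: field_simps)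
  then have "\<lceil>(a * real k - t) / b + 1\<rceil> \<le> \<lceil>(a * real k - t + c) / b\<rceil>" by (rule ceiling_mono)
  then show "\<lceil>(a * real k - t) / b\<rceil> < \<lceil>(a * real k - t + c) / b\<rceil>" by simp
qed

lemma norm_le_row_sums:
  fixes z :: "int \<Rightarrow> complex"
  assumes "0 < a" "a < b" "b < c" "0 \<le> t" "t < b" and Q: "Qabc a b c = enat K"
  shows "norm (z 0) \<le> 2 * (\<Sum>k\<le>K. norm (Mapply a b c t z (int k)))"
proof -
  define L where "L k = \<lceil>(a * real k - t) / b\<rceil>" for k
  define R where "R k = \<lceil>(a * real k - t + c) / b\<rceil>" for k
  interpret sliding_window L R
    unfolding L_def R_def using assms by (intro sliding_window_ceiling) auto
  have row: "Mapply a b c t x (int k) = (\<Sum>v\<in>window k. x v)"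
    for x :: "int \<Rightarrow> 'v::comm_monoid_add" and k
    using Mapply_eq_window_sum[of b a c t x "int k"] assms by (simp add: L_def R_def)
  have "L 0 = 0" using assms by (simp add: L_def ceiling_eq_iff field_simps)
  then have zero: "0 \<in> window 0" using L_less_R[of 0] by simp
  have "tracks K \<subseteq> {0}" if "0 \<in> tracks K"
  proof (rule ccontr)
    assume "\<not> tracks K \<subseteq> {0}"
    then obtain q where q: "q \<in> tracks K" "0 \<noteq> q" by auto
    define x :: "int \<Rightarrow> nat" where "x v = (if track K v \<in> {Some 0, Some q} then 1 else 0)" for v
    have "x \<in> Bvec" by (simp add: Bvec_def x_def)
    moreover have "Mapply a b c t x (0 + int j) = 2" if "j < Suc K" for j
      using window_card_two_tracks[OF \<open>0 \<in> tracks K\<close> q] that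
      by (simp add: row x_def sum.If_cases Int_def)
    ultimately have "enat (Suc K) \<le> Qabc a b c" by (rule Qabc_ge_run) simp_all
    then show False using Q by simp
  qed
  then show ?thesis using norm_le_window_sums[OF zero, of K z] by (simp add: row)
qed

theorem lemma3p5:
  fixes a b c t :: real and z :: "int \<Rightarrow> complex"
  assumes "0 < a" and "a < b" and "b < c"
    and "Qabc a b c \<noteq> \<infinity>"
    and "0 \<le> t" and "t < b"
  shows "(\<Sum>m\<in>{m::int. 0 \<le> a * of_int m \<and>
              a * of_int m \<le> a * real (the_enat (Qabc a b c)) + 2 * a + b + c}.
            norm (Mapply a b c t z m))
         \<ge> b / (2 * c) * norm (z 0)"
proof -
  obtain K where Q: "Qabc a b c = enat K" using assms(4) by (cases "Qabc a b c") auto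
  have "b / (2 * c) * norm (z 0) \<le> norm (z 0) / 2"
    using assms by (simp add: field_simps mult_right_mono)
  also have "\<dots> \<le> (\<Sum>k\<le>K. norm (Mapply a b c t z (int k)))"
    using norm_le_row_sums[OF assms(1-3,5,6) Q, of z] by linarith
  also have "\<dots> \<le> (\<Sum>m\<in>{m. 0 \<le> a * of_int m \<and> a * of_int m \<le> a * real K + 2 * a + b + c}.
      norm (Mapply a b c t z m))"
    using assms by (intro sum_atMost_le_sum_multiples) auto
  finally show ?thesis using Q by simp
qed

end
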